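(* Let $q'>0$, $e'\in(0,1)$, $q_{\max}>0$. There is no $(q,\omega')\in\mathcal D_6$ such that the orbits are linked for every $(e,\omega)\in\mathcal D_5$.
   Context: For $q>0$, $e\in[0,1]$ and angles $\omega,\omega'$, define $r_{\pm}=\frac{q(1+e)}{1\pm e\cos\omega}$, $r'_{\pm}=\frac{q'(1+e')}{1\pm e'\cos\omega'}$ (extended-real values allowed), $d^+=r'_+-r_+$, $d^-=r'_--r_-$. Linked orbits: $d^+d^-<0$. $\mathcal D_5=\{(e,\omega):0\le e\le1,\ 0\le\omega\le\pi\}$, $\mathcal D_6=\{(q,\omega'):0<q\le q_{\max},\ 0\le\omega'\le\pi/2\}$. *)

theory Defs
  imports Complex_Main "HOL-Library.Extended_Real"
begin

text \<open>Apsidal distances as extended reals: the value is +infinity exactly when the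
  denominator vanishes (e = 1 and cos w = -1 resp. +1); the numerator is positive.\<close>
definition r_plus :: "real \<Rightarrow> real \<Rightarrow> real \<Rightarrow> ereal" where
  "r_plus q e w = (if 1 + e * cos w = 0 then \<infinity> else ereal (q * (1 + e) / (1 + e * cos w)))"

definition r_minus :: "real \<Rightarrow> real \<Rightarrow> real \<Rightarrow> ereal" where
  "r_minus q e w = (if 1 - e * cos w = 0 then \<infinity> else ereal (q * (1 + e) / (1 - e * cos w)))"

definition d_plus :: "real \<Rightarrow> real \<Rightarrow> real \<Rightarrow> real \<Rightarrow> real \<Rightarrow> real \<Rightarrow> ereal" where
  "d_plus q e w q' e' w' = r_plus q' e' w' - r_plus q e w"

definition d_minus :: "real \<Rightarrow> real \<Rightarrow> real \<Rightarrow> real \<Rightarrow> real \<Rightarrow> real \<Rightarrow> ereal" where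
  "d_minus q e w q' e' w' = r_minus q' e' w' - r_minus q e w"

definition linked :: "real \<Rightarrow> real \<Rightarrow> real \<Rightarrow> real \<Rightarrow> real \<Rightarrow> real \<Rightarrow> bool" where
  "linked q e w q' e' w' \<longleftrightarrow> d_plus q e w q' e' w' * d_minus q e w q' e' w' < 0"

end

theory Submission
  imports Defs
begin

text \<open>Test orbits with \<open>\<omega> = 0\<close> keep their near apsis at \<open>q\<close> while their far apsis
  \<open>q (1 + e) / (1 - e)\<close> sweeps \<open>[q, \<infinity>)\<close> as \<open>e\<close> runs through \<open>[0, 1)\<close>. The circular orbit
  (\<open>e = 0\<close>) can only be linked with the fixed orbit if its radius \<open>q\<close> lies strictly between
  the fixed orbit's apsidal distances \<open>r'\<^sub>+ \<le> r'\<^sub>-\<close>; but then an eccentric test orbit whose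
  far apsis exceeds \<open>r'\<^sub>-\<close> lies outside the fixed one at both apsides and is not linked.\<close>

lemma abs_mult_cos_less:
  fixes e w :: real
  assumes "\<bar>e\<bar> < 1"
  shows "\<bar>e * cos w\<bar> < 1"
proof -
  have "\<bar>e\<bar> * \<bar>cos w\<bar> \<le> \<bar>e\<bar>" by (simp add: mult_left_le)
  then show ?thesis using assms by (simp add: abs_mult)
qed

lemma r_plus_finite:
  assumes "\<bar>e\<bar> < 1"
  shows "r_plus q e w = ereal (q * (1 + e) / (1 + e * cos w))"
  using abs_mult_cos_less[OF assms, of w] by (auto simp: r_plus_def)

lemma r_minus_finite:
  assumes "\<bar>e\<bar> < 1"
  shows "r_minus q e w = ereal (q * (1 + e) / (1 - e * cos w))"
  using abs_mult_cos_less[OF assms, of w] by (auto simp: r_minus_def)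

lemma apsides_ordered:
  fixes q e w :: real
  assumes "0 < q" "0 \<le> e" "e < 1" "0 \<le> cos w"
  shows "q * (1 + e) / (1 + e * cos w) \<le> q * (1 + e) / (1 - e * cos w)"
proof -
  have "e * cos w < 1"
    using assms cos_le_one[of w] by (smt (verit) mult_left_le)
  moreover have "0 \<le> e * cos w" using assms by simp
  ultimately show ?thesis
    using assms by (intro divide_left_mono) (simp_all add: add_pos_nonneg)
qed

lemma r_plus_circular [simp]: "r_plus q 0 w = ereal q"
  by (simp add: r_plus_def)

lemma r_minus_circular [simp]: "r_minus q 0 w = ereal q"
  by (simp add: r_minus_def)

lemma r_plus_zero_angle:
  assumes "0 \<le> e" "e < 1"
  shows "r_plus q e 0 = ereal q"
  using assms by (simp add: r_plus_def)

lemma r_minus_zero_angle_unbounded: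
  assumes "0 < q"
  obtains e where "0 \<le> e" "e < 1" "ereal B < r_minus q e 0"
proof
  define C where "C = \<bar>B\<bar> + q"
  define e where "e = C / (C + q)"
  have C: "0 < C" using assms by (simp add: C_def add_nonneg_pos)
  show "0 \<le> e" "e < 1" using C assms by (simp_all add: e_def)
  have "1 - e = q / (C + q)" using C assms by (simp add: e_def field_simps)
  then have "q / (1 - e) = C + q" using C assms by simp
  moreover have "q / (1 - e) \<le> q * (1 + e) / (1 - e)"
    using \<open>0 \<le> e\<close> \<open>e < 1\<close> assms by (intro divide_right_mono) auto
  ultimately have "B < q * (1 + e) / (1 - e)"
    unfolding C_def using abs_ge_self[of B] assms by linarith
  then show "ereal B < r_minus q e 0"
    using \<open>0 \<le> e\<close> \<open>e < 1\<close> by (simp add: r_minus_def)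
qed

lemma linked_finite_iff:
  assumes "r_plus q e w = ereal a" "r_minus q e w = ereal b"
    and "r_plus q' e' w' = ereal a'" "r_minus q' e' w' = ereal b'"
  shows "linked q e w q' e' w' \<longleftrightarrow> (a' - a) * (b' - b) < 0"
  using assms by (simp add: linked_def d_plus_def d_minus_def)

theorem mainTheorem16:
  fixes q' e' qmax :: real
  assumes "q' > 0" and "0 < e'" and "e' < 1" and "qmax > 0"
  shows "\<not> (\<exists>q w'. 0 < q \<and> q \<le> qmax \<and> 0 \<le> w' \<and> w' \<le> pi / 2 \<and>
            (\<forall>e w. 0 \<le> e \<and> e \<le> 1 \<and> 0 \<le> w \<and> w \<le> pi \<longrightarrow> linked q e w q' e' w'))"
proof
  assume "\<exists>q w'. 0 < q \<and> q \<le> qmax \<and> 0 \<le> w' \<and> w' \<le> pi / 2 \<and>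
            (\<forall>e w. 0 \<le> e \<and> e \<le> 1 \<and> 0 \<le> w \<and> w \<le> pi \<longrightarrow> linked q e w q' e' w')"
  then obtain q w' where q: "0 < q" and "0 \<le> w'" "w' \<le> pi / 2"
    and linked: "\<And>e w. 0 \<le> e \<Longrightarrow> e \<le> 1 \<Longrightarrow> 0 \<le> w \<Longrightarrow> w \<le> pi \<Longrightarrow> linked q e w q' e' w'"
    by blast
  define A where "A = q' * (1 + e') / (1 + e' * cos w')"
  define B where "B = q' * (1 + e') / (1 - e' * cos w')"
  have fixed: "r_plus q' e' w' = ereal A" "r_minus q' e' w' = ereal B"
    using assms by (simp_all add: A_def B_def r_plus_finite r_minus_finite)
  have "0 \<le> cos w'" using \<open>0 \<le> w'\<close> \<open>w' \<le> pi / 2\<close> by (intro cos_ge_zero) auto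
  then have "A \<le> B" unfolding A_def B_def using assms by (intro apsides_ordered) auto
  moreover have "(A - q) * (B - q) < 0"
    using linked[of 0 0] linked_finite_iff[OF _ _ fixed] by simp
  ultimately have "A < q" by (smt (verit) mult_nonneg_nonneg mult_nonpos_nonpos)
  obtain e where e: "0 \<le> e" "e < 1" and far: "ereal B < r_minus q e 0"
    using r_minus_zero_angle_unbounded[OF q] .
  define b where "b = q * (1 + e) / (1 - e)"
  have "r_minus q e 0 = ereal b" using e by (simp add: b_def r_minus_finite)
  then have "(A - q) * (B - b) < 0"
    using linked[of e 0] e linked_finite_iff[OF r_plus_zero_angle[OF e] _ fixed] by simp
  moreover have "B < b" using far \<open>r_minus q e 0 = ereal b\<close> by simp
  ultimately show False using \<open>A < q\<close> by (smt (verit) mult_neg_neg)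
qed

end
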